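(* Assume the setting and hypotheses below, with the constants $c_2>0$ and $\varkappa>0$ independent of $N$ and $M$. Let $l,T>0$, $h=l/N$, $x_i=ih$, and a time mesh $0=t_0<\dots<t_M=T$. For each $j=0,\dots,M-1$ let weights satisfy $g_j^{j+1}>g_{j-1}^{j+1}>\dots>g_0^{j+1}\ge c_2$ and let $\frac{g_j^{j+1}}{2g_j^{j+1}-g_{j-1}^{j+1}}\le\sigma_{j+1}\le1$ (with $g_{-1}^1:=0$); let $\Lambda=\Lambda^{j+1}$ be linear operators on mesh functions vanishing at $x_0,x_N$ with $(-\Lambda y,y)\ge\varkappa\|y\|_0^2$. Let $y$ solve $$\sum_{s=0}^{j}(y_i^{s+1}-y_i^s)g_s^{j+1}=(\Lambda y^{(\sigma_{j+1})})_i+\varphi_i^{j+1}\ (1\le i\le N-1,\ 0\le j\le M-1),\quad y_0^j=y_N^j=0,\quad y_i^0=u_0(x_i),$$ with $y^{(\sigma_{j+1})}=\sigma_{j+1}y^{j+1}+(1-\sigma_{j+1})y^j$. Let $u(x,t)$ be the solution of the differential problem $$\partial_{0t}^\alpha u=\frac{\partial}{\partial x}\Big(k(x,t)\frac{\partial u}{\partial x}\Big)-q(x,t)u+f(x,t),\ 0<x<l,\ 0<t\le T;\quad u(0,t)=u(l,t)=0;\quad u(x,0)=u_0(x),$$ and suppose the scheme has approximation order $\mathcal O(N^{-r_1}+M^{-r_2})$ for some $r_1,r_2>0$, i.e. the truncation error $$\psi_i^{j+1}:=(\Lambda u^{(\sigma_{j+1})})_i-\sum_{s=0}^{j}(u_i^{s+1}-u_i^s)g_s^{j+1}+\varphi_i^{j+1},\qquad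 u_i^j=u(x_i,t_j),$$ satisfies $|\psi_i^{j+1}|\le C(N^{-r_1}+M^{-r_2})$ for all $i,j$ with $C$ independent of $N,M$. Then $\|y^j-u^j\|_0=\mathcal O(N^{-r_1}+M^{-r_2})$ uniformly in $j=0,\dots,M$, i.e. the solution of the scheme converges to $u$ in the mesh $L_2$-norm with the rate of the approximation error.
   Context: $(y,v)=\sum_{i=1}^{N-1}y_iv_ih$, $\|y\|_0^2=(y,y)$. The Caputo derivative of order $\alpha\in(0,1)$ is $\partial_{0t}^\alpha u(x,t)=\frac{1}{\Gamma(1-\alpha)}\int_0^t \partial_\eta u(x,\eta)(t-\eta)^{-\alpha}d\eta$. Here $k\ge c_1>0$, $q\ge0$, $f$ are sufficiently smooth functions. *)

theory Defs
  imports "HOL-Analysis.Analysis"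
begin

text \<open>Mesh functions on the grid x_i = i h, i = 0..N, are represented as nat => real;
  only indices 0..N are meaningful.\<close>

definition mesh_ip :: "nat \<Rightarrow> real \<Rightarrow> (nat \<Rightarrow> real) \<Rightarrow> (nat \<Rightarrow> real) \<Rightarrow> real" where
  "mesh_ip N h y v = (\<Sum>i = 1..N - 1. y i * v i * h)"

definition mesh_norm0 :: "nat \<Rightarrow> real \<Rightarrow> (nat \<Rightarrow> real) \<Rightarrow> real" where
  "mesh_norm0 N h y = sqrt (mesh_ip N h y y)"

definition mesh_zero_bd :: "nat \<Rightarrow> (nat \<Rightarrow> real) \<Rightarrow> bool" where
  "mesh_zero_bd N v \<longleftrightarrow> v 0 = 0 \<and> v N = 0"

definition mesh_linear_op :: "nat \<Rightarrow> ((nat \<Rightarrow> real) \<Rightarrow> (nat \<Rightarrow> real)) \<Rightarrow> bool" where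
  "mesh_linear_op N L \<longleftrightarrow>
     (\<forall>v w. mesh_zero_bd N v \<longrightarrow> mesh_zero_bd N w \<longrightarrow> (\<forall>i\<le>N. v i = w i) \<longrightarrow>
        (\<forall>i\<in>{1..N - 1}. L v i = L w i)) \<and>
     (\<forall>v w a b. mesh_zero_bd N v \<longrightarrow> mesh_zero_bd N w \<longrightarrow>
        (\<forall>i\<in>{1..N - 1}. L (\<lambda>k. a * v k + b * w k) i = a * L v i + b * L w i))"

definition caputo :: "real \<Rightarrow> (real \<Rightarrow> real) \<Rightarrow> real \<Rightarrow> real" where
  "caputo \<alpha> v t = (1 / Gamma (1 - \<alpha>)) * integral {0..t} (\<lambda>\<eta>. deriv v \<eta> * (t - \<eta>) powr (- \<alpha>))"

definition is_solution ::
  "real \<Rightarrow> real \<Rightarrow> real \<Rightarrow> (real \<Rightarrow> real \<Rightarrow> real) \<Rightarrow> (real \<Rightarrow> real \<Rightarrow> real) \<Rightarrow>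
   (real \<Rightarrow> real \<Rightarrow> real) \<Rightarrow> (real \<Rightarrow> real) \<Rightarrow> (real \<Rightarrow> real \<Rightarrow> real) \<Rightarrow> bool" where
  "is_solution \<alpha> l T k q f u0 u \<longleftrightarrow>
     continuous_on ({0..l} \<times> {0..T}) (\<lambda>(x, t). u x t) \<and>
     (\<forall>x\<in>{0<..<l}. \<forall>t\<in>{0<..T}.
        (\<forall>\<eta>\<in>{0<..t}. (\<lambda>s. u x s) differentiable (at \<eta>)) \<and>
        (\<lambda>s. u x s) differentiable (at_right 0) \<and>
        (\<lambda>\<eta>. deriv (\<lambda>s. u x s) \<eta> * (t - \<eta>) powr (- \<alpha>)) integrable_on {0..t} \<and>
        (\<lambda>y. u y t) differentiable (at x) \<and>
        (\<lambda>y. k y t * deriv (\<lambda>z. u z t) y) differentiable (at x) \<and>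
        caputo \<alpha> (\<lambda>s. u x s) t =
          deriv (\<lambda>y. k y t * deriv (\<lambda>z. u z t) y) x - q x t * u x t + f x t) \<and>
     (\<forall>t\<in>{0..T}. u 0 t = 0 \<and> u l t = 0) \<and>
     (\<forall>x\<in>{0..l}. u x 0 = u0 x)"

end

theory Submission
  imports Defs
begin

text \<open>Energy method. Write \<open>v\<^sup>\<sigma> = \<sigma> v\<^sub>j\<^sub>+\<^sub>1 + (1 - \<sigma>) v\<^sub>j\<close>. For weights
  \<open>0 < g\<^sub>0 < \<dots> < g\<^sub>j\<close> and \<open>g\<^sub>j / (2 g\<^sub>j - g\<^sub>j\<^sub>-\<^sub>1) \<le> \<sigma> \<le> 1\<close>, Alikhanov's inequality
  \<open>1/2 \<Sum>\<^sub>s g\<^sub>s (v\<^sub>s\<^sub>+\<^sub>1\<^sup>2 - v\<^sub>s\<^sup>2) \<le> (\<Sum>\<^sub>s g\<^sub>s (v\<^sub>s\<^sub>+\<^sub>1 - v\<^sub>s)) v\<^sup>\<sigma>\<close> holds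
  (summation by parts reduces it to \<open>g\<^sub>j (1 - \<sigma>)\<^sup>2 \<le> (g\<^sub>j - g\<^sub>j\<^sub>-\<^sub>1) \<sigma>\<^sup>2\<close>).
  The error \<open>z = y - u\<close> solves the scheme with the truncation error \<open>\<psi>\<close> as right-hand side.
  Taking the mesh inner product with \<open>z\<^sup>\<sigma>\<close>, coercivity of \<open>-\<Lambda>\<close> and Young's inequality give
  \<open>\<Sum>\<^sub>s g\<^sub>s (E\<^sub>s\<^sub>+\<^sub>1 - E\<^sub>s) \<le> \<parallel>\<psi>\<parallel>\<^sub>0\<^sup>2 / (2\<kappa>)\<close> for \<open>E\<^sub>s = \<parallel>z\<^sub>s\<parallel>\<^sub>0\<^sup>2\<close>; summation by parts
  once more, with \<open>g\<^sub>0 \<ge> c\<^sub>2\<close>, yields \<open>E\<^sub>j \<le> E\<^sub>0 + l max \<bar>\<psi>\<bar>\<^sup>2 / (2\<kappa>c\<^sub>2)\<close> by strong induction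
  on \<open>j\<close>, and \<open>E\<^sub>0 = 0\<close>. The differential equation enters only through the assumed bound on
  the truncation error: of \<open>u\<close> only the boundary and initial values are used.\<close>

lemma lift_Suc_mono_le_upto:
  fixes f :: "nat \<Rightarrow> 'a::preorder"
  assumes "\<forall>k<n. f k \<le> f (Suc k)" and "m \<le> n"
  shows "f m \<le> f n"
  using assms(2,1) by (induction n rule: dec_induct) (auto intro: order.trans)

lemma sum_weighted_increments_by_parts:
  fixes g D :: "nat \<Rightarrow> 'a::comm_ring"
  shows "(\<Sum>s\<le>n. g s * (D (Suc s) - D s))
    = g n * D (Suc n) - g 0 * D 0 - (\<Sum>s<n. (g (Suc s) - g s) * D (Suc s))"
  by (induction n) (simp_all add: algebra_simps)

lemma weighted_decrement_sum_ge:
  fixes g D :: "nat \<Rightarrow> real"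
  assumes "0 \<le> g 0" and "\<forall>s<n. g s \<le> g (Suc s)" and "\<forall>s. 0 \<le> D s"
  shows "(g n - (if n = 0 then 0 else g (n - 1))) * D n
    \<le> (\<Sum>s\<le>n. g s * (D s - D (Suc s))) + g n * D (Suc n)"
proof -
  have parts: "(\<Sum>s\<le>n. g s * (D s - D (Suc s))) + g n * D (Suc n)
      = g 0 * D 0 + (\<Sum>s<n. (g (Suc s) - g s) * D (Suc s))"
  proof -
    have "(\<Sum>s\<le>n. g s * (D s - D (Suc s))) = - (\<Sum>s\<le>n. g s * (D (Suc s) - D s))"
      by (simp flip: sum_negf add: algebra_simps)
    then show ?thesis
      using sum_weighted_increments_by_parts[of g D n] by simp
  qed
  have terms: "\<forall>s<n. 0 \<le> (g (Suc s) - g s) * D (Suc s)"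
    using assms(2,3) by simp
  show ?thesis
  proof (cases n)
    case 0
    then show ?thesis by (simp add: algebra_simps)
  next
    case (Suc m)
    have "0 \<le> g 0 * D 0 + (\<Sum>s<m. (g (Suc s) - g s) * D (Suc s))"
      using assms(1,3) terms Suc by (intro add_nonneg_nonneg sum_nonneg) auto
    then show ?thesis
      unfolding parts using Suc by simp
  qed
qed

lemma alikhanov_weight_ineq:
  fixes G gp \<sigma> :: real
  assumes "0 \<le> gp" and "gp < G" and "G / (2 * G - gp) \<le> \<sigma>" and "\<sigma> \<le> 1"
  shows "G * (1 - \<sigma>)\<^sup>2 \<le> (G - gp) * \<sigma>\<^sup>2"
proof -
  have \<sigma>: "G \<le> \<sigma> * (2 * G - gp)"
    using assms by (simp add: divide_le_eq)
  then have "0 < \<sigma> * (2 * G - gp)"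
    using assms by simp
  then have "0 \<le> \<sigma>"
    using assms by (simp add: zero_less_mult_iff)
  then have "0 \<le> gp * \<sigma> * (1 - \<sigma>)"
    using assms by simp
  with \<sigma> show ?thesis
    by (simp add: algebra_simps power2_eq_square)
qed

lemma alikhanov_inequality:
  fixes g v :: "nat \<Rightarrow> real"
  assumes g0: "0 < g 0" and g_mono: "\<forall>s<j. g s < g (Suc s)"
    and \<sigma>: "g j / (2 * g j - (if j = 0 then 0 else g (j - 1))) \<le> \<sigma>" "\<sigma> \<le> 1"
  shows "(1/2) * (\<Sum>s\<le>j. g s * ((v (Suc s))\<^sup>2 - (v s)\<^sup>2))
    \<le> (\<Sum>s\<le>j. (v (Suc s) - v s) * g s) * (\<sigma> * v (Suc j) + (1 - \<sigma>) * v j)"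
proof -
  define gp where "gp = (if j = 0 then 0 else g (j - 1))"
  define V where "V = \<sigma> * v (Suc j) + (1 - \<sigma>) * v j"
  define D where "D s = (V - v s)\<^sup>2" for s
  have g_le: "\<forall>s<j. g s \<le> g (Suc s)"
    using g_mono by auto
  have gp: "0 \<le> gp \<and> gp < g j"
  proof (cases j)
    case (Suc m)
    then have "g 0 \<le> g m"
      using lift_Suc_mono_le_upto[of m g 0] g_le by simp
    then show ?thesis
      using g0 g_mono Suc unfolding gp_def by auto
  qed (use g0 gp_def in auto)
  \<comment> \<open>termwise, \<open>(b - a) V - (b\<^sup>2 - a\<^sup>2)/2 = ((V - a)\<^sup>2 - (V - b)\<^sup>2)/2\<close>\<close>
  have split: "(\<Sum>s\<le>j. (v (Suc s) - v s) * g s) * V - (1/2) * (\<Sum>s\<le>j. g s * ((v (Suc s))\<^sup>2 - (v s)\<^sup>2))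
      = (1/2) * (\<Sum>s\<le>j. g s * (D s - D (Suc s)))"
    unfolding sum_distrib_left sum_distrib_right sum_subtractf[symmetric] D_def
    by (rule sum.cong) (auto simp: power2_eq_square algebra_simps)
  have "(g j - gp) * D j \<le> (\<Sum>s\<le>j. g s * (D s - D (Suc s))) + g j * D (Suc j)"
    using weighted_decrement_sum_ge[of g j D] g0 g_le unfolding gp_def D_def by simp
  moreover have "g j * D (Suc j) \<le> (g j - gp) * D j"
  proof -
    have "D j = \<sigma>\<^sup>2 * (v (Suc j) - v j)\<^sup>2" "D (Suc j) = (1 - \<sigma>)\<^sup>2 * (v (Suc j) - v j)\<^sup>2"
      unfolding D_def V_def by (simp_all add: power2_eq_square algebra_simps)
    moreover have "g j * (1 - \<sigma>)\<^sup>2 \<le> (g j - gp) * \<sigma>\<^sup>2"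
      using alikhanov_weight_ineq gp \<sigma> unfolding gp_def by blast
    ultimately show ?thesis
      by (simp add: mult.assoc[symmetric] mult_right_mono)
  qed
  ultimately show ?thesis
    using split unfolding V_def by linarith
qed

lemma mesh_norm0_sq: "0 \<le> h \<Longrightarrow> (mesh_norm0 N h v)\<^sup>2 = mesh_ip N h v v"
  unfolding mesh_norm0_def mesh_ip_def by (simp add: sum_nonneg)

lemma mesh_ip_le_young:
  assumes "0 < \<kappa>" and "0 \<le> h"
  shows "mesh_ip N h p w \<le> mesh_ip N h p p / (4 * \<kappa>) + \<kappa> * mesh_ip N h w w"
proof -
  have "p i * w i * h \<le> p i * p i * h / (4 * \<kappa>) + \<kappa> * (w i * w i * h)" for i
  proof -
    have "0 \<le> (p i - 2 * \<kappa> * w i)\<^sup>2 / (4 * \<kappa>)"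
      using assms by simp
    then have "p i * w i \<le> p i * p i / (4 * \<kappa>) + \<kappa> * (w i * w i)"
      using assms by (simp add: power2_eq_square field_simps)
    then show ?thesis
      using assms(2) mult_right_mono by (fastforce simp: algebra_simps)
  qed
  then show ?thesis
    unfolding mesh_ip_def sum_divide_distrib sum_distrib_left sum.distrib[symmetric]
    by (rule sum_mono)
qed

lemma mesh_ip_self_le:
  assumes "0 \<le> h" and "real N * h \<le> l" and "\<forall>i\<in>{1..N - 1}. \<bar>p i\<bar> \<le> B"
  shows "mesh_ip N h p p \<le> l * B\<^sup>2"
proof -
  have "mesh_ip N h p p \<le> (\<Sum>i = 1..N - 1. B\<^sup>2 * h)"
    unfolding mesh_ip_def
  proof (rule sum_mono)
    fix i assume "i \<in> {1..N - 1}"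
    then have "(p i)\<^sup>2 \<le> B\<^sup>2"
      using assms(3) abs_le_square_iff by force
    then show "p i * p i * h \<le> B\<^sup>2 * h"
      using assms(1) by (simp add: power2_eq_square mult_right_mono)
  qed
  also have "\<dots> = real (N - 1) * h * B\<^sup>2"
    by simp
  also have "\<dots> \<le> l * B\<^sup>2"
  proof -
    have "real (N - 1) * h \<le> real N * h"
      using assms(1) by (intro mult_right_mono) auto
    then show ?thesis
      using assms(2) by (intro mult_right_mono) auto
  qed
  finally show ?thesis .
qed

lemma mesh_energy_step:
  fixes j :: nat and \<sigma> :: real and g :: "nat \<Rightarrow> real" and z :: "nat \<Rightarrow> nat \<Rightarrow> real"
    and L :: "(nat \<Rightarrow> real) \<Rightarrow> nat \<Rightarrow> real"
  defines "w \<equiv> \<lambda>m. \<sigma> * z (Suc j) m + (1 - \<sigma>) * z j m"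
  assumes "0 < h" and "0 < \<kappa>"
    and "0 < g 0" and "\<forall>s<j. g s < g (Suc s)"
    and "g j / (2 * g j - (if j = 0 then 0 else g (j - 1))) \<le> \<sigma>" and "\<sigma> \<le> 1"
    and coercive: "\<kappa> * (mesh_norm0 N h w)\<^sup>2 \<le> mesh_ip N h (\<lambda>i. - L w i) w"
    and scheme: "\<forall>i\<in>{1..N - 1}. (\<Sum>s\<le>j. (z (Suc s) i - z s i) * g s) = L w i + \<psi> i"
  shows "(\<Sum>s\<le>j. g s * (mesh_ip N h (z (Suc s)) (z (Suc s)) - mesh_ip N h (z s) (z s)))
    \<le> mesh_ip N h \<psi> \<psi> / (2 * \<kappa>)"
proof -
  define Q where "Q i = (\<Sum>s\<le>j. g s * ((z (Suc s) i)\<^sup>2 - (z s i)\<^sup>2))" for i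
  have "(\<Sum>s\<le>j. g s * (mesh_ip N h (z (Suc s)) (z (Suc s)) - mesh_ip N h (z s) (z s)))
      = (\<Sum>i = 1..N - 1. Q i * h)"
    unfolding mesh_ip_def Q_def sum_subtractf[symmetric] sum_distrib_left sum_distrib_right
    by (subst sum.swap) (simp add: power2_eq_square algebra_simps)
  then have "(1/2) * (\<Sum>s\<le>j. g s * (mesh_ip N h (z (Suc s)) (z (Suc s)) - mesh_ip N h (z s) (z s)))
      = (\<Sum>i = 1..N - 1. (1/2) * Q i * h)"
    by (simp add: sum_distrib_left mult.assoc)
  also have "\<dots> \<le> (\<Sum>i = 1..N - 1. (L w i + \<psi> i) * w i * h)"
  proof (rule sum_mono)
    fix i assume "i \<in> {1..N - 1}"
    then have "(1/2) * Q i \<le> (L w i + \<psi> i) * w i"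
      using alikhanov_inequality[of g j \<sigma> "\<lambda>s. z s i"] assms(4-7) scheme
      unfolding w_def Q_def by simp
    then show "(1/2) * Q i * h \<le> (L w i + \<psi> i) * w i * h"
      using \<open>0 < h\<close> by (simp add: mult_right_mono)
  qed
  also have "\<dots> = mesh_ip N h \<psi> w - mesh_ip N h (\<lambda>i. - L w i) w"
    unfolding mesh_ip_def by (simp add: sum_subtractf[symmetric] algebra_simps)
  also have "\<dots> \<le> mesh_ip N h \<psi> \<psi> / (4 * \<kappa>)"
    using mesh_ip_le_young[of \<kappa> h N \<psi> w] coercive mesh_norm0_sq[of h N w] assms(2,3) by simp
  finally show ?thesis
    by (simp add: field_simps)
qed

lemma energy_bound_of_weighted_increments:
  fixes g :: "nat \<Rightarrow> nat \<Rightarrow> real" and E :: "nat \<Rightarrow> real"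
  assumes "0 < c" and "0 \<le> F"
    and weights: "\<forall>m<M. c \<le> g m 0 \<and> (\<forall>s<m. g m s \<le> g m (Suc s))"
    and increments: "\<forall>m<M. (\<Sum>s\<le>m. g m s * (E (Suc s) - E s)) \<le> c * F"
    and "j \<le> M"
  shows "E j \<le> E 0 + F"
  using \<open>j \<le> M\<close>
proof (induction j rule: less_induct)
  case (less j)
  show ?case
  proof (cases j)
    case 0
    then show ?thesis using \<open>0 \<le> F\<close> by simp
  next
    case (Suc m)
    have "m < M" and g: "c \<le> g m 0" "\<forall>s<m. g m s \<le> g m (Suc s)"
      using less.prems Suc weights by auto
    have "(\<Sum>s<m. (g m (Suc s) - g m s) * E (Suc s)) \<le> (\<Sum>s<m. (g m (Suc s) - g m s) * (E 0 + F))"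
      using g less.IH less.prems Suc by (intro sum_mono mult_left_mono) auto
    also have "\<dots> = (g m m - g m 0) * (E 0 + F)"
      by (simp only: sum_distrib_right[symmetric] sum_lessThan_telescope)
    finally have "g m m * E (Suc m) \<le> c * F + g m 0 * E 0 + (g m m - g m 0) * (E 0 + F)"
      using sum_weighted_increments_by_parts[of "g m" E m] increments \<open>m < M\<close> by auto
    also have "\<dots> \<le> g m m * (E 0 + F)"
      using g \<open>0 \<le> F\<close> by (simp add: algebra_simps mult_left_mono)
    finally have "g m m * E (Suc m) \<le> g m m * (E 0 + F)" .
    moreover have "0 < g m m"
      using g lift_Suc_mono_le_upto[of m "g m" 0] \<open>0 < c\<close> by simp
    ultimately show ?thesis
      using Suc by simp
  qed
qed

lemma scheme_stability:
  fixes z \<psi> g :: "nat \<Rightarrow> nat \<Rightarrow> real" and \<sigma> :: "nat \<Rightarrow> real"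
    and L :: "nat \<Rightarrow> (nat \<Rightarrow> real) \<Rightarrow> nat \<Rightarrow> real"
  assumes "0 < h" and "real N * h \<le> l" and "0 < \<kappa>" and "0 < c2"
    and weights: "\<forall>j<M. c2 \<le> g j 0 \<and> (\<forall>s<j. g j s < g j (Suc s))"
    and sigma: "\<forall>j<M. g j j / (2 * g j j - (if j = 0 then 0 else g j (j - 1))) \<le> \<sigma> j \<and> \<sigma> j \<le> 1"
    and coercive: "\<forall>j<M. \<forall>v. mesh_zero_bd N v \<longrightarrow>
      \<kappa> * (mesh_norm0 N h v)\<^sup>2 \<le> mesh_ip N h (\<lambda>i. - L j v i) v"
    and boundary: "\<forall>j\<le>M. mesh_zero_bd N (z j)"
    and scheme: "\<forall>j<M. \<forall>i\<in>{1..N - 1}. (\<Sum>s\<le>j. (z (Suc s) i - z s i) * g j s)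
      = L j (\<lambda>m. \<sigma> j * z (Suc j) m + (1 - \<sigma> j) * z j m) i + \<psi> j i"
    and residual: "\<forall>j<M. \<forall>i\<in>{1..N - 1}. \<bar>\<psi> j i\<bar> \<le> B"
    and "j \<le> M"
  shows "mesh_ip N h (z j) (z j) \<le> mesh_ip N h (z 0) (z 0) + l * B\<^sup>2 / (2 * \<kappa> * c2)"
proof (rule energy_bound_of_weighted_increments[where E = "\<lambda>j. mesh_ip N h (z j) (z j)"])
  show "\<forall>m<M. c2 \<le> g m 0 \<and> (\<forall>s<m. g m s \<le> g m (Suc s))"
    using weights by (auto intro: less_imp_le)
  show "\<forall>m<M. (\<Sum>s\<le>m. g m s * (mesh_ip N h (z (Suc s)) (z (Suc s)) - mesh_ip N h (z s) (z s)))
      \<le> c2 * (l * B\<^sup>2 / (2 * \<kappa> * c2))"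
  proof (intro allI impI)
    fix m assume "m < M"
    have "mesh_zero_bd N (\<lambda>i. \<sigma> m * z (Suc m) i + (1 - \<sigma> m) * z m i)"
      using boundary \<open>m < M\<close> unfolding mesh_zero_bd_def by simp
    then have "(\<Sum>s\<le>m. g m s * (mesh_ip N h (z (Suc s)) (z (Suc s)) - mesh_ip N h (z s) (z s)))
        \<le> mesh_ip N h (\<psi> m) (\<psi> m) / (2 * \<kappa>)"
      using assms(1,3,4) weights sigma coercive scheme \<open>m < M\<close>
      by (intro mesh_energy_step[where \<sigma> = "\<sigma> m" and j = m]) auto
    also have "\<dots> \<le> l * B\<^sup>2 / (2 * \<kappa>)"
      using mesh_ip_self_le[of h N l "\<psi> m" B] assms(1-3) residual \<open>m < M\<close>
      by (simp add: divide_right_mono)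
    also have "\<dots> = c2 * (l * B\<^sup>2 / (2 * \<kappa> * c2))"
      using \<open>0 < c2\<close> by simp
    finally show "(\<Sum>s\<le>m. g m s * (mesh_ip N h (z (Suc s)) (z (Suc s)) - mesh_ip N h (z s) (z s)))
        \<le> c2 * (l * B\<^sup>2 / (2 * \<kappa> * c2))" .
  qed
  show "0 \<le> l * B\<^sup>2 / (2 * \<kappa> * c2)"
    using assms(1-4) by (simp add: zero_le_mult_iff order.trans[of 0 "real N * h" l])
qed (use assms in auto)

lemma mesh_linear_op_diff:
  assumes "mesh_linear_op N L" and "mesh_zero_bd N v" and "mesh_zero_bd N w" and "i \<in> {1..N - 1}"
  shows "L (\<lambda>k. v k - w k) i = L v i - L w i"
proof -
  have "L (\<lambda>k. 1 * v k + (-1) * w k) i = 1 * L v i + (-1) * L w i"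
    using assms unfolding mesh_linear_op_def by blast
  then show ?thesis
    by simp
qed

lemma scheme_error_estimate:
  fixes y U \<phi> g :: "nat \<Rightarrow> nat \<Rightarrow> real" and \<sigma> :: "nat \<Rightarrow> real"
    and L :: "nat \<Rightarrow> (nat \<Rightarrow> real) \<Rightarrow> nat \<Rightarrow> real"
  assumes "0 < h" and "real N * h \<le> l" and "0 < \<kappa>" and "0 < c2" and "0 \<le> B"
    and weights: "\<forall>j<M. c2 \<le> g j 0 \<and> (\<forall>s<j. g j s < g j (Suc s))"
    and sigma: "\<forall>j<M. g j j / (2 * g j j - (if j = 0 then 0 else g j (j - 1))) \<le> \<sigma> j \<and> \<sigma> j \<le> 1"
    and operator: "\<forall>j<M. mesh_linear_op N (L j) \<and> (\<forall>v. mesh_zero_bd N v \<longrightarrow>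
      \<kappa> * (mesh_norm0 N h v)\<^sup>2 \<le> mesh_ip N h (\<lambda>i. - L j v i) v)"
    and scheme: "\<forall>j<M. \<forall>i\<in>{1..N - 1}. (\<Sum>s\<le>j. (y (Suc s) i - y s i) * g j s)
      = L j (\<lambda>m. \<sigma> j * y (Suc j) m + (1 - \<sigma> j) * y j m) i + \<phi> j i"
    and y_boundary: "\<forall>j\<le>M. y j 0 = 0 \<and> y j N = 0"
    and U_boundary: "\<forall>j\<le>M. U j 0 = 0 \<and> U j N = 0"
    and initial: "\<forall>i\<in>{1..N - 1}. y 0 i = U 0 i"
    and truncation: "\<forall>j<M. \<forall>i\<in>{1..N - 1}.
      \<bar>L j (\<lambda>m. \<sigma> j * U (Suc j) m + (1 - \<sigma> j) * U j m) i
        - (\<Sum>s\<le>j. (U (Suc s) i - U s i) * g j s) + \<phi> j i\<bar> \<le> B"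
    and "j \<le> M"
  shows "mesh_norm0 N h (\<lambda>i. y j i - U j i) \<le> B * sqrt (l / (2 * \<kappa> * c2))"
proof -
  define z where "z j i = y j i - U j i" for j i
  define \<psi> where "\<psi> j i = L j (\<lambda>m. \<sigma> j * U (Suc j) m + (1 - \<sigma> j) * U j m) i
    - (\<Sum>s\<le>j. (U (Suc s) i - U s i) * g j s) + \<phi> j i" for j i
  have z_boundary: "\<forall>j\<le>M. mesh_zero_bd N (z j)"
    using y_boundary U_boundary unfolding mesh_zero_bd_def z_def by simp
  have z_scheme: "(\<Sum>s\<le>j. (z (Suc s) i - z s i) * g j s)
      = L j (\<lambda>m. \<sigma> j * z (Suc j) m + (1 - \<sigma> j) * z j m) i + \<psi> j i"
    if "j < M" and "i \<in> {1..N - 1}" for j i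
  proof -
    have "(\<lambda>m. \<sigma> j * z (Suc j) m + (1 - \<sigma> j) * z j m)
        = (\<lambda>m. (\<sigma> j * y (Suc j) m + (1 - \<sigma> j) * y j m) - (\<sigma> j * U (Suc j) m + (1 - \<sigma> j) * U j m))"
      unfolding z_def by (simp add: algebra_simps)
    then have "L j (\<lambda>m. \<sigma> j * z (Suc j) m + (1 - \<sigma> j) * z j m) i
        = L j (\<lambda>m. \<sigma> j * y (Suc j) m + (1 - \<sigma> j) * y j m) i
          - L j (\<lambda>m. \<sigma> j * U (Suc j) m + (1 - \<sigma> j) * U j m) i"
      using mesh_linear_op_diff[of N "L j" "\<lambda>m. \<sigma> j * y (Suc j) m + (1 - \<sigma> j) * y j m"
          "\<lambda>m. \<sigma> j * U (Suc j) m + (1 - \<sigma> j) * U j m" i]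
        operator y_boundary U_boundary that
      unfolding mesh_zero_bd_def by simp
    moreover have "(\<Sum>s\<le>j. (z (Suc s) i - z s i) * g j s)
        = (\<Sum>s\<le>j. (y (Suc s) i - y s i) * g j s) - (\<Sum>s\<le>j. (U (Suc s) i - U s i) * g j s)"
      unfolding z_def sum_subtractf[symmetric] by (simp add: algebra_simps)
    ultimately show ?thesis
      using scheme that unfolding \<psi>_def by simp
  qed
  have "mesh_ip N h (z j) (z j) \<le> mesh_ip N h (z 0) (z 0) + l * B\<^sup>2 / (2 * \<kappa> * c2)"
    using assms(1-4) weights sigma operator z_boundary z_scheme truncation \<open>j \<le> M\<close>
    by (intro scheme_stability[where \<psi> = \<psi>]) (auto simp: \<psi>_def)
  moreover have "mesh_ip N h (z 0) (z 0) = 0"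
    using initial unfolding mesh_ip_def z_def by simp
  moreover have l: "0 \<le> l"
    using assms(1,2) by (smt (verit) of_nat_0_le_iff zero_le_mult_iff)
  ultimately have "mesh_ip N h (z j) (z j) \<le> (B * sqrt (l / (2 * \<kappa> * c2)))\<^sup>2"
    using assms(3,4) by (simp add: power_mult_distrib mult.commute)
  then show ?thesis
    unfolding mesh_norm0_def z_def using \<open>0 \<le> B\<close> l assms(3,4) by (intro real_le_lsqrt) auto
qed

theorem theorem2:
  fixes l T \<alpha> c1 c2 \<kappa> C r1 r2 :: real
    and k q f u :: "real \<Rightarrow> real \<Rightarrow> real" and u0 :: "real \<Rightarrow> real"
  assumes "l > 0" and "T > 0" and "0 < \<alpha>" and "\<alpha> < 1"
    and "c1 > 0" and "\<forall>x t. k x t \<ge> c1" and "\<forall>x t. q x t \<ge> 0"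
    and "c2 > 0" and "\<kappa> > 0" and "C \<ge> 0" and "r1 > 0" and "r2 > 0"
    and "is_solution \<alpha> l T k q f u0 u"
  shows "\<exists>K. \<forall>(N::nat) (M::nat) (t::nat \<Rightarrow> real) (g::nat \<Rightarrow> nat \<Rightarrow> real) (\<sigma>::nat \<Rightarrow> real)
            (\<Lambda>::nat \<Rightarrow> (nat \<Rightarrow> real) \<Rightarrow> (nat \<Rightarrow> real)) (\<phi>::nat \<Rightarrow> nat \<Rightarrow> real)
            (y::nat \<Rightarrow> nat \<Rightarrow> real).
      let h = l / real N in
      N \<ge> 1 \<and> M \<ge> 1 \<and>
      t 0 = 0 \<and> t M = T \<and> (\<forall>j<M. t j < t (j + 1)) \<and>
      (\<forall>j<M. g j 0 \<ge> c2 \<and> (\<forall>s<j. g j s < g j (s + 1))) \<and>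
      (\<forall>j<M. g j j / (2 * g j j - (if j = 0 then 0 else g j (j - 1))) \<le> \<sigma> j \<and> \<sigma> j \<le> 1) \<and>
      (\<forall>j<M. mesh_linear_op N (\<Lambda> j) \<and>
         (\<forall>v. mesh_zero_bd N v \<longrightarrow>
            mesh_ip N h (\<lambda>i. - \<Lambda> j v i) v \<ge> \<kappa> * (mesh_norm0 N h v)\<^sup>2)) \<and>
      (\<forall>j<M. \<forall>i\<in>{1..N - 1}.
         (\<Sum>s\<le>j. (y (s + 1) i - y s i) * g j s)
           = \<Lambda> j (\<lambda>m. \<sigma> j * y (j + 1) m + (1 - \<sigma> j) * y j m) i + \<phi> j i) \<and>
      (\<forall>j\<le>M. y j 0 = 0 \<and> y j N = 0) \<and>
      (\<forall>i\<in>{1..N - 1}. y 0 i = u0 (real i * h)) \<and>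
      (\<forall>j<M. \<forall>i\<in>{1..N - 1}.
         \<bar>\<Lambda> j (\<lambda>m. \<sigma> j * u (real m * h) (t (j + 1)) + (1 - \<sigma> j) * u (real m * h) (t j)) i
           - (\<Sum>s\<le>j. (u (real i * h) (t (s + 1)) - u (real i * h) (t s)) * g j s)
           + \<phi> j i\<bar> \<le> C * (real N powr (- r1) + real M powr (- r2)))
      \<longrightarrow> (\<forall>j\<le>M. mesh_norm0 N h (\<lambda>i. y j i - u (real i * h) (t j))
                   \<le> K * (real N powr (- r1) + real M powr (- r2)))"
proof -
  define K where "K = C * sqrt (l / (2 * \<kappa> * c2))"
  have u_boundary: "\<forall>\<tau>\<in>{0..T}. u 0 \<tau> = 0 \<and> u l \<tau> = 0" and u_initial: "\<forall>x\<in>{0..l}. u x 0 = u0 x"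
    using assms(13) unfolding is_solution_def by blast+
  show ?thesis
    unfolding Let_def
  proof (intro exI[of _ K] allI impI, elim conjE, goal_cases)
    case (1 N M t g \<sigma> \<Lambda> \<phi> y j)
    have t_mono: "\<forall>k<M. t k \<le> t (Suc k)"
      using 1 by (simp add: less_imp_le)
    have times: "t m \<in> {0..T}" if "m \<le> M" for m
      using lift_Suc_mono_le_upto[of m t 0] lift_Suc_mono_le_upto[of M t m] t_mono 1 that by auto
    have nodes: "real i * (l / real N) \<in> {0..l}" if "i \<le> N" for i
      using 1 assms(1) that by (auto simp: field_simps)
    have "mesh_norm0 N (l / real N) (\<lambda>i. y j i - u (real i * (l / real N)) (t j))
        \<le> (C * (real N powr - r1 + real M powr - r2)) * sqrt (l / (2 * \<kappa> * c2))"
      by (rule scheme_error_estimate) (use 1 assms times nodes u_boundary u_initial in auto)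
    then show ?case
      unfolding K_def by (simp add: ac_simps)
  qed
qed

end
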